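(* Let $\mu$ be a finite positive Borel measure on $\mathbb{T}$ and let $C$ be a conjugation on $L^2(\mu)$ such that $CM_\xi = M_\xi C$, where $(M_\xi f)(\xi) = \xi f(\xi)$. Then $\mu^c\ll\mu$.
   Context: A conjugation is an antilinear, isometric map $C$ with $C^2 = I$. $\mu^c(\Omega) := \mu(\{\overline{\xi}:\xi\in\Omega\})$ for Borel $\Omega\subset\mathbb{T}$. *)

theory Defs
  imports "HOL-Analysis.Analysis"
begin

abbreviation circle :: "complex set" where
  "circle \<equiv> sphere 0 1"

definition borel_measure_on_circle :: "complex measure \<Rightarrow> bool" where
  "borel_measure_on_circle M \<longleftrightarrow>
     finite_measure M \<and> space M = circle \<and> sets M = sets (restrict_space borel circle)"

text \<open>Representatives of elements of L2(mu): Borel measurable, square integrable.\<close>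
definition L2 :: "complex measure \<Rightarrow> (complex \<Rightarrow> complex) set" where
  "L2 M = {f. f \<in> borel_measurable M \<and> integrable M (\<lambda>x. (cmod (f x))\<^sup>2)}"

definition L2_eq :: "complex measure \<Rightarrow> (complex \<Rightarrow> complex) \<Rightarrow> (complex \<Rightarrow> complex) \<Rightarrow> bool" where
  "L2_eq M f g \<longleftrightarrow> (AE x in M. f x = g x)"

definition L2_norm :: "complex measure \<Rightarrow> (complex \<Rightarrow> complex) \<Rightarrow> real" where
  "L2_norm M f = sqrt (integral\<^sup>L M (\<lambda>x. (cmod (f x))\<^sup>2))"

text \<open>A conjugation on L2(mu), acting on representatives: a well-defined map of
  L2(mu) to itself (respecting a.e. equality) that is antilinear, isometric, and
  satisfies C^2 = I.\<close>
definition conjugation_L2 :: "complex measure \<Rightarrow> ((complex \<Rightarrow> complex) \<Rightarrow> (complex \<Rightarrow> complex)) \<Rightarrow> bool" where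
  "conjugation_L2 M C \<longleftrightarrow>
     (\<forall>f\<in>L2 M. C f \<in> L2 M) \<and>
     (\<forall>f\<in>L2 M. \<forall>g\<in>L2 M. L2_eq M f g \<longrightarrow> L2_eq M (C f) (C g)) \<and>
     (\<forall>f\<in>L2 M. \<forall>g\<in>L2 M. \<forall>a b. L2_eq M (C (\<lambda>x. a * f x + b * g x))
                                      (\<lambda>x. cnj a * C f x + cnj b * C g x)) \<and>
     (\<forall>f\<in>L2 M. L2_norm M (C f) = L2_norm M f) \<and>
     (\<forall>f\<in>L2 M. L2_eq M (C (C f)) f)"

definition mult_xi :: "(complex \<Rightarrow> complex) \<Rightarrow> (complex \<Rightarrow> complex)" where
  "mult_xi f = (\<lambda>z. z * f z)"

definition conj_measure :: "complex measure \<Rightarrow> complex measure" where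
  "conj_measure M = measure_of (space M) (sets M) (\<lambda>A. emeasure M (cnj ` A))"

end

theory Submission
  imports Defs
begin

(* Antilinearity of C together with C M\<^sub>\<xi> = M\<^sub>\<xi> C, and cnj \<xi> = 1/\<xi> on the circle, give
   C (p f) = (p \<circ> cnj) C f for real polynomials p in Re \<xi> and Im \<xi>. With g = C 1, the
   isometry of C turns this into \<integral> p\<^sup>2 d\<mu> = \<integral> (p \<circ> cnj)\<^sup>2 |g|\<^sup>2 d\<mu>. Approximating the indicator
   of a compact K by such polynomials (Stone-Weierstrass, dominated convergence) yields
   \<mu>(K) = \<integral>\<^bsub>cnj K\<^esub> |g|\<^sup>2 d\<mu>, which vanishes when cnj K lies in a \<mu>-null set A. Inner
   regularity then gives \<mu>(cnj A) = 0. *)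

lemma norm_eq_1_imp_inverse_eq_cnj:
  assumes "cmod z = 1"
  shows "inverse z = cnj z"
proof (rule inverse_unique)
  show "z * cnj z = 1" using complex_norm_square[of z] assms by simp
qed

lemma bounded_linear_complex_to_real:
  fixes l :: "complex \<Rightarrow> real"
  assumes "bounded_linear l"
  shows "l = (\<lambda>z. Re z * l 1 + Im z * l \<i>)"
proof
  interpret bounded_linear l by fact
  fix z :: complex
  have "z = Re z *\<^sub>R 1 + Im z *\<^sub>R \<i>" by (simp add: complex_eq_iff)
  then have "l z = l (Re z *\<^sub>R 1 + Im z *\<^sub>R \<i>)" by simp
  then show "l z = Re z * l 1 + Im z * l \<i>" by (simp add: add scaleR)
qed

lemma continuous_functions_tendsto_indicator:
  fixes K :: "'a::metric_space set"
  assumes "closed K"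
  obtains \<phi> :: "nat \<Rightarrow> 'a \<Rightarrow> real"
  where "\<And>n. continuous_on UNIV (\<phi> n)" "\<And>n x. \<bar>\<phi> n x\<bar> \<le> 1"
    and "\<And>x. (\<lambda>n. \<phi> n x) \<longlonglongrightarrow> indicator K x"
proof (cases "K = {}")
  case True
  then show ?thesis by (intro that[of "\<lambda>n x. 0"]) auto
next
  case False
  define \<phi> where "\<phi> n x = max 0 (1 - real (Suc n) * infdist x K)" for n x
  have "(\<lambda>n. \<phi> n x) \<longlonglongrightarrow> indicator K x" for x
  proof (cases "x \<in> K")
    case True
    then show ?thesis by (simp add: \<phi>_def)
  next
    case x: False
    then have d: "infdist x K > 0"
      using in_closed_iff_infdist_zero[OF assms False] infdist_nonneg[of x K] by auto
    obtain n0 :: nat where n0: "inverse (infdist x K) < real n0"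
      using reals_Archimedean2 by blast
    have "\<phi> n x = 0" if "n \<ge> n0" for n
    proof -
      have "inverse (infdist x K) < real (Suc n)" using n0 that by simp
      then have "1 < real (Suc n) * infdist x K" using d by (simp add: field_simps)
      then show ?thesis by (simp add: \<phi>_def)
    qed
    then have "(\<lambda>n. \<phi> n x) \<longlonglongrightarrow> 0"
      by (intro tendsto_eventually) (auto simp: eventually_sequentially)
    then show ?thesis using x by simp
  qed
  moreover have "continuous_on UNIV (\<phi> n)" for n
    unfolding \<phi>_def by (intro continuous_intros)
  moreover have "\<bar>\<phi> n x\<bar> \<le> 1" for n x
    unfolding \<phi>_def using infdist_nonneg[of x K] by auto
  ultimately show ?thesis using that by blast
qed

lemma real_polynomials_tendsto_indicator:
  fixes S K :: "'a::euclidean_space set"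
  assumes "compact S" and "closed K"
  obtains P :: "nat \<Rightarrow> 'a \<Rightarrow> real"
  where "\<And>n. real_polynomial_function (P n)" "\<And>n x. x \<in> S \<Longrightarrow> \<bar>P n x\<bar> \<le> 2"
    and "\<And>x. x \<in> S \<Longrightarrow> (\<lambda>n. P n x) \<longlonglongrightarrow> indicator K x"
proof -
  obtain \<phi> :: "nat \<Rightarrow> 'a \<Rightarrow> real" where \<phi>_cont: "\<And>n. continuous_on UNIV (\<phi> n)"
    and \<phi>_bound: "\<And>n x. \<bar>\<phi> n x\<bar> \<le> 1" and \<phi>_lim: "\<And>x. (\<lambda>n. \<phi> n x) \<longlonglongrightarrow> indicator K x"
    using continuous_functions_tendsto_indicator[OF assms(2)] by blast
  have "\<exists>p. real_polynomial_function p \<and> (\<forall>x\<in>S. \<bar>\<phi> n x - p x\<bar> < inverse (real (Suc n)))" for n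
    using Stone_Weierstrass_real_polynomial_function[OF assms(1)
        continuous_on_subset[OF \<phi>_cont subset_UNIV], of "inverse (real (Suc n))"]
    by (metis inverse_positive_iff_positive of_nat_0_less_iff zero_less_Suc)
  then obtain P where P_poly: "\<And>n. real_polynomial_function (P n)"
    and P_approx: "\<And>n x. x \<in> S \<Longrightarrow> \<bar>\<phi> n x - P n x\<bar> < inverse (real (Suc n))"
    by metis
  show ?thesis
  proof (rule that[OF P_poly])
    fix n x assume "x \<in> S"
    then show "\<bar>P n x\<bar> \<le> 2"
      using P_approx[of x n] \<phi>_bound[of n x] inverse_le_1_iff[of "real (Suc n)"] by auto
  next
    fix x assume x: "x \<in> S"
    have "(\<lambda>n. P n x - \<phi> n x) \<longlonglongrightarrow> 0"
    proof (rule Lim_null_comparison[OF _ LIMSEQ_inverse_real_of_nat])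
      show "\<forall>\<^sub>F n in sequentially. norm (P n x - \<phi> n x) \<le> inverse (real (Suc n))"
        using P_approx[OF x] by (auto intro: always_eventually less_imp_le simp: abs_minus_commute)
    qed
    from tendsto_add[OF this \<phi>_lim[of x]] show "(\<lambda>n. P n x) \<longlonglongrightarrow> indicator K x" by simp
  qed
qed

lemma emeasure_zero_if_compact_subsets_null:
  fixes M :: "'a::{second_countable_topology, complete_space} measure"
  assumes "finite_measure M" and sets_M: "sets M = sets (restrict_space borel S)"
    and "S \<in> sets borel" and B: "B \<in> sets M"
    and compact_null: "\<And>K. K \<subseteq> B \<Longrightarrow> compact K \<Longrightarrow> emeasure M K = 0"
  shows "emeasure M B = 0"
proof -
  interpret finite_measure M by fact
  have space_M: "space M = S"
    using sets_eq_imp_space_eq[OF sets_M] by (simp add: space_restrict_space)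
  have id_meas: "(\<lambda>x. x) \<in> measurable M borel"
    unfolding measurable_cong_sets[OF sets_M refl] by (rule measurable_restrict_space1) simp
  \<comment> \<open>\<open>inner_regular\<close> needs a measure on all Borel sets: extend \<open>M\<close> by zero outside \<open>S\<close>.\<close>
  define M' where "M' = distr M borel (\<lambda>x. x)"
  have emeasure_M': "emeasure M' X = emeasure M X" if "X \<in> sets borel" "X \<subseteq> S" for X
    unfolding M'_def using emeasure_distr[OF id_meas that(1)] that(2) space_M
    by (simp add: Int_absorb2)
  have B_sub: "B \<subseteq> S" using sets.sets_into_space[OF B] space_M by simp
  have B_borel: "B \<in> sets borel"
    using B sets_restrict_space_iff[of S borel B] assms(3) unfolding sets_M by auto
  have "emeasure M' (space M') \<noteq> \<infinity>"
    unfolding M'_def by (simp add: emeasure_distr[OF id_meas])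
  then have "emeasure M' B = (SUP K \<in> {K. K \<subseteq> B \<and> compact K}. emeasure M' K)"
    by (intro inner_regular B_borel) (simp add: M'_def)
  also have "\<dots> = (SUP K \<in> {K. K \<subseteq> B \<and> compact K}. 0)"
    using B_sub compact_null emeasure_M' by (intro SUP_cong) (auto simp: borel_compact)
  also have "\<dots> = 0"
    by (rule SUP_const) (use compact_empty in blast)
  finally show ?thesis
    using emeasure_M'[OF B_borel B_sub] by simp
qed

locale circle_conjugation =
  fixes M :: "complex measure" and C :: "(complex \<Rightarrow> complex) \<Rightarrow> complex \<Rightarrow> complex"
  assumes measure_on_circle: "borel_measure_on_circle M"
    and conjugation: "conjugation_L2 M C"
    and commutes_mult_xi: "\<forall>f\<in>L2 M. L2_eq M (C (mult_xi f)) (mult_xi (C f))"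
begin

lemma finite_M: "finite_measure M"
  and space_M: "space M = circle"
  and sets_M: "sets M = sets (restrict_space borel circle)"
  using measure_on_circle unfolding borel_measure_on_circle_def by auto

lemma C_L2: "f \<in> L2 M \<Longrightarrow> C f \<in> L2 M"
  using conjugation unfolding conjugation_L2_def by auto

lemma C_cong_AE:
  "f \<in> L2 M \<Longrightarrow> g \<in> L2 M \<Longrightarrow> AE x in M. f x = g x \<Longrightarrow> AE x in M. C f x = C g x"
  using conjugation unfolding conjugation_L2_def L2_eq_def by auto

lemma C_antilinear:
  "f \<in> L2 M \<Longrightarrow> g \<in> L2 M \<Longrightarrow>
    AE x in M. C (\<lambda>x. a * f x + b * g x) x = cnj a * C f x + cnj b * C g x"
  using conjugation unfolding conjugation_L2_def L2_eq_def by auto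

lemma C_isometric: "f \<in> L2 M \<Longrightarrow> L2_norm M (C f) = L2_norm M f"
  using conjugation unfolding conjugation_L2_def by auto

lemma C_mult_xi: "f \<in> L2 M \<Longrightarrow> AE x in M. C (\<lambda>x. x * f x) x = x * C f x"
  using commutes_mult_xi unfolding L2_eq_def mult_xi_def by auto

lemma AE_circle: "AE x in M. x \<in> circle"
  using AE_space[of M] by (simp add: space_M)

lemma measurable_continuous_on_circle: "continuous_on circle h \<Longrightarrow> h \<in> borel_measurable M"
  unfolding measurable_cong_sets[OF sets_M refl] by (rule borel_measurable_continuous_on_restrict)

lemma L2_one: "(\<lambda>x. 1) \<in> L2 M"
proof -
  interpret finite_measure M by (rule finite_M)
  show ?thesis unfolding L2_def by simp
qed

lemma L2_mult_continuous:
  assumes h: "continuous_on circle h" and f: "f \<in> L2 M"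
  shows "(\<lambda>x. h x * f x) \<in> L2 M"
proof -
  obtain B where B: "\<And>x. x \<in> circle \<Longrightarrow> cmod (h x) \<le> B"
    using compact_imp_bounded[OF compact_continuous_image[OF h compact_sphere]]
    unfolding bounded_iff by blast
  have f_meas: "f \<in> borel_measurable M" and f_int: "integrable M (\<lambda>x. (cmod (f x))\<^sup>2)"
    using f unfolding L2_def by auto
  have hf_meas: "(\<lambda>x. h x * f x) \<in> borel_measurable M"
    using measurable_continuous_on_circle[OF h] f_meas by measurable
  have "integrable M (\<lambda>x. (cmod (h x * f x))\<^sup>2)"
  proof (rule Bochner_Integration.integrable_bound)
    show "integrable M (\<lambda>x. B\<^sup>2 * (cmod (f x))\<^sup>2)" using f_int by simp
    show "(\<lambda>x. (cmod (h x * f x))\<^sup>2) \<in> borel_measurable M" using hf_meas by measurable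
    show "AE x in M. norm ((cmod (h x * f x))\<^sup>2) \<le> norm (B\<^sup>2 * (cmod (f x))\<^sup>2)"
      using AE_circle
    proof eventually_elim
      case (elim x)
      then have "(cmod (h x))\<^sup>2 \<le> B\<^sup>2" using B by (meson norm_ge_zero power_mono)
      then show ?case by (simp add: norm_mult power_mult_distrib mult_right_mono)
    qed
  qed
  with hf_meas show ?thesis unfolding L2_def by simp
qed

lemma C_mult_inverse:
  assumes f: "f \<in> L2 M"
  shows "AE x in M. C (\<lambda>x. inverse x * f x) x = inverse x * C f x"
proof -
  define u where "u x = inverse x * f x" for x
  have u: "u \<in> L2 M"
    unfolding u_def by (rule L2_mult_continuous[OF _ f]) (intro continuous_intros, auto)
  have xu: "(\<lambda>x. x * u x) \<in> L2 M"
    by (rule L2_mult_continuous[OF _ u]) (intro continuous_intros)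
  have "AE x in M. x * u x = f x"
    using AE_circle
  proof eventually_elim
    case (elim x)
    then have "x \<noteq> 0" by auto
    then show ?case by (simp add: u_def)
  qed
  then have "AE x in M. C (\<lambda>x. x * u x) x = C f x" by (rule C_cong_AE[OF xu f])
  with C_mult_xi[OF u] AE_circle show ?thesis
    unfolding u_def[symmetric] by eventually_elim (auto simp: field_simps)
qed

definition twisted_multiplier :: "(complex \<Rightarrow> real) \<Rightarrow> bool" where
  "twisted_multiplier p \<longleftrightarrow> (\<forall>f\<in>L2 M.
     AE x in M. C (\<lambda>x. of_real (p x) * f x) x = of_real (p (cnj x)) * C f x)"

lemma twisted_multiplier_const: "twisted_multiplier (\<lambda>x. c)"
  unfolding twisted_multiplier_def using C_antilinear[of _ _ "of_real c" 0] by simp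

lemma twisted_multiplier_add:
  assumes "continuous_on circle p" "continuous_on circle q"
    and "twisted_multiplier p" "twisted_multiplier q"
  shows "twisted_multiplier (\<lambda>x. p x + q x)"
  unfolding twisted_multiplier_def
proof
  fix f assume f: "f \<in> L2 M"
  have pf: "(\<lambda>x. of_real (p x) * f x) \<in> L2 M" and qf: "(\<lambda>x. of_real (q x) * f x) \<in> L2 M"
    by (rule L2_mult_continuous[OF _ f], intro continuous_intros assms(1,2))+
  have "AE x in M. C (\<lambda>x. of_real (p x) * f x) x = of_real (p (cnj x)) * C f x"
    and "AE x in M. C (\<lambda>x. of_real (q x) * f x) x = of_real (q (cnj x)) * C f x"
    using assms(3,4) f unfolding twisted_multiplier_def by blast+
  with C_antilinear[OF pf qf, of 1 1]
  show "AE x in M. C (\<lambda>x. of_real (p x + q x) * f x) x = of_real (p (cnj x) + q (cnj x)) * C f x"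
    by eventually_elim (simp add: distrib_right)
qed

lemma twisted_multiplier_mult:
  assumes "continuous_on circle q" and "twisted_multiplier p" "twisted_multiplier q"
  shows "twisted_multiplier (\<lambda>x. p x * q x)"
  unfolding twisted_multiplier_def
proof
  fix f assume f: "f \<in> L2 M"
  define qf where "qf x = of_real (q x) * f x" for x
  have qf: "qf \<in> L2 M"
    unfolding qf_def by (rule L2_mult_continuous[OF _ f]) (intro continuous_intros assms(1))
  have "AE x in M. C (\<lambda>x. of_real (p x) * qf x) x = of_real (p (cnj x)) * C qf x"
    using assms(2) qf unfolding twisted_multiplier_def by blast
  moreover have "AE x in M. C qf x = of_real (q (cnj x)) * C f x"
    using assms(3) f unfolding twisted_multiplier_def qf_def by blast
  ultimately show "AE x in M. C (\<lambda>x. of_real (p x * q x) * f x) x = of_real (p (cnj x) * q (cnj x)) * C f x"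
    unfolding qf_def by eventually_elim (simp add: mult.assoc)
qed

lemma twisted_multiplier_Laurent:
  assumes p: "\<And>x. x \<in> circle \<Longrightarrow> of_real (p x) = a * x + b * inverse x"
    and p_cnj: "\<And>x. x \<in> circle \<Longrightarrow> of_real (p (cnj x)) = cnj a * x + cnj b * inverse x"
  shows "twisted_multiplier p"
  unfolding twisted_multiplier_def
proof
  fix f assume f: "f \<in> L2 M"
  define g where "g x = a * (x * f x) + b * (inverse x * f x)" for x
  have xf: "(\<lambda>x. x * f x) \<in> L2 M"
    by (rule L2_mult_continuous[OF _ f]) (intro continuous_intros)
  have uf: "(\<lambda>x. inverse x * f x) \<in> L2 M"
    by (rule L2_mult_continuous[OF _ f]) (intro continuous_intros, auto)
  have "g = (\<lambda>x. (a * x + b * inverse x) * f x)"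
    unfolding g_def by (simp add: algebra_simps fun_eq_iff)
  also have "\<dots> \<in> L2 M"
    by (rule L2_mult_continuous[OF _ f]) (intro continuous_intros, auto)
  finally have g: "g \<in> L2 M" .
  have pf: "(\<lambda>x. of_real (p x) * f x) \<in> L2 M"
  proof -
    have "continuous_on circle (\<lambda>x. a * x + b * inverse x)"
      by (intro continuous_intros) auto
    then have "continuous_on circle (\<lambda>x. complex_of_real (p x))"
      by (rule continuous_on_eq) (simp add: p)
    then show ?thesis by (rule L2_mult_continuous[OF _ f])
  qed
  have "AE x in M. of_real (p x) * f x = g x"
    using AE_circle by eventually_elim (simp add: p g_def algebra_simps)
  then have "AE x in M. C (\<lambda>x. of_real (p x) * f x) x = C g x"
    by (rule C_cong_AE[OF pf g])
  with C_antilinear[OF xf uf, of a b] C_mult_xi[OF f] C_mult_inverse[OF f] AE_circle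
  show "AE x in M. C (\<lambda>x. of_real (p x) * f x) x = of_real (p (cnj x)) * C f x"
    unfolding g_def by eventually_elim (simp add: p_cnj algebra_simps)
qed

lemma twisted_multiplier_Re: "twisted_multiplier Re"
  by (rule twisted_multiplier_Laurent[of _ "1/2" "1/2"])
    (auto simp: norm_eq_1_imp_inverse_eq_cnj complex_eq_iff)

lemma twisted_multiplier_Im: "twisted_multiplier Im"
  by (rule twisted_multiplier_Laurent[of _ "-\<i>/2" "\<i>/2"])
    (auto simp: norm_eq_1_imp_inverse_eq_cnj complex_eq_iff)

lemma twisted_multiplier_real_polynomial:
  "real_polynomial_function p \<Longrightarrow> twisted_multiplier p"
proof (induction rule: real_polynomial_function.induct)
  case (linear l)
  have "twisted_multiplier (\<lambda>z. Re z * l 1 + Im z * l \<i>)"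
    by (intro twisted_multiplier_add twisted_multiplier_mult twisted_multiplier_Re
        twisted_multiplier_Im twisted_multiplier_const continuous_intros)
  then show ?case using bounded_linear_complex_to_real[OF linear] by simp
next
  case (const c)
  then show ?case by (rule twisted_multiplier_const)
next
  case (add p q)
  then show ?case
    by (intro twisted_multiplier_add[of p q] continuous_on_polymonial_function)
      (auto simp: real_polynomial_function_eq)
next
  case (mult p q)
  then show ?case
    by (intro twisted_multiplier_mult[of q p] continuous_on_polymonial_function)
      (auto simp: real_polynomial_function_eq)
qed

lemma integral_real_polynomial_sq:
  assumes p: "real_polynomial_function p"
  shows "(\<integral>x. (p x)\<^sup>2 \<partial>M) = (\<integral>x. (p (cnj x))\<^sup>2 * (cmod (C (\<lambda>x. 1) x))\<^sup>2 \<partial>M)"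
proof -
  define u where "u x = complex_of_real (p x) * 1" for x
  have p_cont: "continuous_on S p" for S
    using p by (simp add: continuous_on_polymonial_function real_polynomial_function_eq)
  have u: "u \<in> L2 M"
    unfolding u_def by (rule L2_mult_continuous[OF _ L2_one]) (intro continuous_intros p_cont)
  have C1: "C (\<lambda>x. 1) \<in> borel_measurable M"
    using C_L2[OF L2_one] unfolding L2_def by auto
  have p_cnj: "(\<lambda>x. p (cnj x)) \<in> borel_measurable M"
    by (intro measurable_continuous_on_circle continuous_on_compose2[OF p_cont]
        continuous_intros) auto
  have "L2_norm M (C u) = L2_norm M u" by (rule C_isometric[OF u])
  then have "(\<integral>x. (cmod (C u x))\<^sup>2 \<partial>M) = (\<integral>x. (cmod (u x))\<^sup>2 \<partial>M)"
    unfolding L2_norm_def by simp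
  also have "(\<integral>x. (cmod (C u x))\<^sup>2 \<partial>M) = (\<integral>x. (p (cnj x))\<^sup>2 * (cmod (C (\<lambda>x. 1) x))\<^sup>2 \<partial>M)"
  proof (rule integral_cong_AE)
    show "(\<lambda>x. (cmod (C u x))\<^sup>2) \<in> borel_measurable M"
      using C_L2[OF u] unfolding L2_def by auto
    show "(\<lambda>x. (p (cnj x))\<^sup>2 * (cmod (C (\<lambda>x. 1) x))\<^sup>2) \<in> borel_measurable M"
      using p_cnj C1 by measurable
    have "AE x in M. C u x = of_real (p (cnj x)) * C (\<lambda>x. 1) x"
      using twisted_multiplier_real_polynomial[OF p] L2_one
      unfolding twisted_multiplier_def u_def by (rule bspec)
    then show "AE x in M. (cmod (C u x))\<^sup>2 = (p (cnj x))\<^sup>2 * (cmod (C (\<lambda>x. 1) x))\<^sup>2"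
      by eventually_elim (simp add: norm_mult power_mult_distrib)
  qed
  finally show ?thesis by (simp add: u_def)
qed

lemma tendsto_integral_indicator_comp:
  assumes K: "closed K"
    and P_poly: "\<And>n. real_polynomial_function (P n)"
    and P_bound: "\<And>n x. x \<in> circle \<Longrightarrow> \<bar>P n x\<bar> \<le> 2"
    and P_lim: "\<And>x. x \<in> circle \<Longrightarrow> (\<lambda>n. P n x) \<longlonglongrightarrow> indicator K x"
    and \<sigma>: "continuous_on circle \<sigma>" "\<sigma> ` circle \<subseteq> circle"
    and w: "integrable M w"
  shows "(\<lambda>n. \<integral>x. (P n (\<sigma> x))\<^sup>2 * w x \<partial>M) \<longlonglongrightarrow> (\<integral>x. indicator K (\<sigma> x) * w x \<partial>M)"
proof (rule integral_dominated_convergence[where w="\<lambda>x. 4 * \<bar>w x\<bar>"])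
  have \<sigma>_meas: "\<sigma> \<in> borel_measurable M" by (rule measurable_continuous_on_circle[OF \<sigma>(1)])
  show "(\<lambda>x. indicator K (\<sigma> x) * w x) \<in> borel_measurable M"
    using \<sigma>_meas w borel_closed[OF K] by measurable
  show "(\<lambda>x. (P n (\<sigma> x))\<^sup>2 * w x) \<in> borel_measurable M" for n
  proof -
    have "continuous_on UNIV (P n)"
      using P_poly by (simp add: continuous_on_polymonial_function real_polynomial_function_eq)
    then have "(\<lambda>x. P n (\<sigma> x)) \<in> borel_measurable M"
      by (intro measurable_continuous_on_circle continuous_on_compose2[OF _ \<sigma>(1)]) auto
    with w show ?thesis by measurable
  qed
  show "integrable M (\<lambda>x. 4 * \<bar>w x\<bar>)" using w by simp
  show "AE x in M. (\<lambda>n. (P n (\<sigma> x))\<^sup>2 * w x) \<longlonglongrightarrow> indicator K (\<sigma> x) * w x"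
    using AE_circle
  proof eventually_elim
    case (elim x)
    then have "\<sigma> x \<in> circle" using \<sigma>(2) by blast
    then have "(\<lambda>n. (P n (\<sigma> x))\<^sup>2 * w x) \<longlonglongrightarrow> (indicator K (\<sigma> x))\<^sup>2 * w x"
      by (intro tendsto_intros P_lim)
    then show ?case by (cases "\<sigma> x \<in> K") simp_all
  qed
  show "AE x in M. norm ((P n (\<sigma> x))\<^sup>2 * w x) \<le> 4 * \<bar>w x\<bar>" for n
    using AE_circle
  proof eventually_elim
    case (elim x)
    then have "\<sigma> x \<in> circle" using \<sigma>(2) by blast
    then have "\<bar>P n (\<sigma> x)\<bar>\<^sup>2 \<le> 2\<^sup>2"
      using P_bound by (intro power_mono) auto
    then show ?case by (simp add: abs_mult mult_right_mono)
  qed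
qed

lemma measure_closed_eq:
  assumes K: "closed K" "K \<subseteq> circle"
  shows "measure M K = (\<integral>x. indicator K (cnj x) * (cmod (C (\<lambda>x. 1) x))\<^sup>2 \<partial>M)"
proof -
  interpret finite_measure M by (rule finite_M)
  obtain P where P_poly: "\<And>n. real_polynomial_function (P n)"
    and P_bound: "\<And>n x. x \<in> circle \<Longrightarrow> \<bar>P n x\<bar> \<le> 2"
    and P_lim: "\<And>x. x \<in> circle \<Longrightarrow> (\<lambda>n. P n x) \<longlonglongrightarrow> indicator K x"
    using real_polynomials_tendsto_indicator[OF compact_sphere K(1)] by blast
  note tendsto = tendsto_integral_indicator_comp[OF K(1) P_poly P_bound P_lim]
  have "(\<lambda>n. \<integral>x. (P n x)\<^sup>2 * 1 \<partial>M) \<longlonglongrightarrow> (\<integral>x. indicator K x * 1 \<partial>M)"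
    by (rule tendsto[where \<sigma>="\<lambda>x. x"]) simp_all
  moreover have "(\<lambda>n. \<integral>x. (P n (cnj x))\<^sup>2 * (cmod (C (\<lambda>x. 1) x))\<^sup>2 \<partial>M)
      \<longlonglongrightarrow> (\<integral>x. indicator K (cnj x) * (cmod (C (\<lambda>x. 1) x))\<^sup>2 \<partial>M)"
    using C_L2[OF L2_one] unfolding L2_def
    by (intro tendsto continuous_intros) auto
  ultimately have "(\<integral>x. indicator K x \<partial>M) = (\<integral>x. indicator K (cnj x) * (cmod (C (\<lambda>x. 1) x))\<^sup>2 \<partial>M)"
    by (simp add: integral_real_polynomial_sq[OF P_poly] LIMSEQ_unique)
  moreover have "K \<in> sets M"
    using K unfolding sets_M by (subst sets_restrict_space_iff) (auto intro: borel_closed)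
  ultimately show ?thesis by simp
qed

lemma emeasure_cnj_image_null:
  assumes A: "A \<in> null_sets M"
  shows "emeasure M (cnj ` A) = 0"
proof (cases "cnj ` A \<in> sets M")
  case False
  then show ?thesis by (simp add: emeasure_notin_sets)
next
  case True
  interpret finite_measure M by (rule finite_M)
  show ?thesis
  proof (rule emeasure_zero_if_compact_subsets_null[OF finite_M sets_M _ True])
    show "circle \<in> sets borel" by (intro borel_closed) simp
    fix K assume K: "K \<subseteq> cnj ` A" "compact K"
    have "K \<subseteq> circle" using K(1) sets.sets_into_space[OF True] space_M by simp
    then have "measure M K = (\<integral>x. indicator K (cnj x) * (cmod (C (\<lambda>x. 1) x))\<^sup>2 \<partial>M)"
      by (intro measure_closed_eq compact_imp_closed K(2))
    also have "\<dots> = 0"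
    proof (rule integral_eq_zero_AE)
      show "AE x in M. indicator K (cnj x) * (cmod (C (\<lambda>x. 1) x))\<^sup>2 = 0"
        using AE_not_in[OF A] by eventually_elim (use K(1) in \<open>auto simp: indicator_def\<close>)
    qed
    finally show "emeasure M K = 0" by (simp add: emeasure_eq_measure)
  qed
qed

end

theorem proposition5p1:
  fixes M :: "complex measure"
    and C :: "(complex \<Rightarrow> complex) \<Rightarrow> (complex \<Rightarrow> complex)"
  assumes "borel_measure_on_circle M"
    and "conjugation_L2 M C"
    and "\<forall>f\<in>L2 M. L2_eq M (C (mult_xi f)) (mult_xi (C f))"
  shows "absolutely_continuous M (conj_measure M)"
  unfolding absolutely_continuous_def
proof
  interpret circle_conjugation M C by (rule circle_conjugation.intro[OF assms])
  fix A assume A: "A \<in> null_sets M"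
  have "sets (conj_measure M) = sets M"
    unfolding conj_measure_def by (simp add: sets.space_closed sets.sigma_sets_eq)
  moreover have "emeasure (conj_measure M) A = 0"
    using A emeasure_cnj_image_null[OF A]
    unfolding conj_measure_def by (simp add: emeasure_measure_of_conv)
  ultimately show "A \<in> null_sets (conj_measure M)" using A by auto
qed

end
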